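(* Let $E$ be an arbitrary directed graph, $K$ a field, and $H\subseteq E^0$ hereditary and saturated. Put $H^\bot=E^0-R(H)$. If $v$ is a vertex with $v\in B_{H^\bot}$, then $v^{H^\bot}=v-\sum ee^*\in L_K(E)$, where the sum runs over the elements $e$ of the nonempty finite set $\mathbf{s}^{-1}(v)\cap\mathbf{r}^{-1}(R(H))$. Moreover $v\in R(H)-H$.
   Context: Graph $E$ with vertices $E^0$, edges $E^1$, source/range maps $\mathbf{s},\mathbf{r}$. A path is a vertex or a finite sequence of edges $e_1\dots e_n$ with $\mathbf{r}(e_i)=\mathbf{s}(e_{i+1})$. For $u,v\in E^0$ write $u\ge v$ if there is a path from $u$ to $v$ (a vertex is a path from itself to itself). For $V\subseteq E^0$, $R(V)=\{u\in E^0\mid u\ge v\text{ for some }v\in V\}$. $H$ is hereditary if $\mathbf{r}(p)\in H$ whenever $p$ is a path with $\mathbf{s}(p)\in H$; saturated if every regular vertex $v$ (emitting a nonzero finite number of edges) with $\mathbf{r}(\mathbf{s}^{-1}(v))\subseteq H$ lies in $H$. For hereditary saturated $G$, $B_G=\{v\in E^0-G\mid v$ emits infinitely many edges and $\mathbf{s}^{-1}(v)\cap\mathbf{r}^{-1}(E^0-G)$ is nonempty and finite$\}$, and for $v\in B_G$, $v^G=v-\sum_{e\in\mathbf{s}^{-1}(v)\cap\mathbf{r}^{-1}(E^0-G)}ee^*\in L_K(E)$ (Leavitt path algebra of $E$ over $K$). $E^0-R(H)$ is hereditary and saturated. *)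

theory Defs
  imports Main
begin

definition graph :: "'v set \<Rightarrow> 'e set \<Rightarrow> ('e \<Rightarrow> 'v) \<Rightarrow> ('e \<Rightarrow> 'v) \<Rightarrow> bool" where
  "graph V Ed s r \<longleftrightarrow> (\<forall>e\<in>Ed. s e \<in> V \<and> r e \<in> V)"

definition src_inv :: "'e set \<Rightarrow> ('e \<Rightarrow> 'v) \<Rightarrow> 'v \<Rightarrow> 'e set" where
  "src_inv Ed s v = {e \<in> Ed. s e = v}"

fun is_path :: "'e set \<Rightarrow> ('e \<Rightarrow> 'v) \<Rightarrow> ('e \<Rightarrow> 'v) \<Rightarrow> 'e list \<Rightarrow> bool" where
  "is_path Ed s r [] = False"
| "is_path Ed s r [e] = (e \<in> Ed)"
| "is_path Ed s r (e # f # p) = (e \<in> Ed \<and> r e = s f \<and> is_path Ed s r (f # p))"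

definition geq :: "'v set \<Rightarrow> 'e set \<Rightarrow> ('e \<Rightarrow> 'v) \<Rightarrow> ('e \<Rightarrow> 'v) \<Rightarrow> 'v \<Rightarrow> 'v \<Rightarrow> bool" where
  "geq V Ed s r u w \<longleftrightarrow> (u \<in> V \<and> u = w) \<or>
      (\<exists>p. is_path Ed s r p \<and> s (hd p) = u \<and> r (last p) = w)"

definition tree_R :: "'v set \<Rightarrow> 'e set \<Rightarrow> ('e \<Rightarrow> 'v) \<Rightarrow> ('e \<Rightarrow> 'v) \<Rightarrow> 'v set \<Rightarrow> 'v set" where
  "tree_R V Ed s r W = {u \<in> V. \<exists>w\<in>W. geq V Ed s r u w}"

definition hereditary :: "'v set \<Rightarrow> 'e set \<Rightarrow> ('e \<Rightarrow> 'v) \<Rightarrow> ('e \<Rightarrow> 'v) \<Rightarrow> 'v set \<Rightarrow> bool" where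
  "hereditary V Ed s r H \<longleftrightarrow> H \<subseteq> V \<and>
     (\<forall>p. is_path Ed s r p \<and> s (hd p) \<in> H \<longrightarrow> r (last p) \<in> H)"

definition regular :: "'e set \<Rightarrow> ('e \<Rightarrow> 'v) \<Rightarrow> 'v \<Rightarrow> bool" where
  "regular Ed s v \<longleftrightarrow> src_inv Ed s v \<noteq> {} \<and> finite (src_inv Ed s v)"

definition saturated :: "'v set \<Rightarrow> 'e set \<Rightarrow> ('e \<Rightarrow> 'v) \<Rightarrow> ('e \<Rightarrow> 'v) \<Rightarrow> 'v set \<Rightarrow> bool" where
  "saturated V Ed s r H \<longleftrightarrow>
     (\<forall>v\<in>V. regular Ed s v \<and> r ` src_inv Ed s v \<subseteq> H \<longrightarrow> v \<in> H)"

definition breaking :: "'v set \<Rightarrow> 'e set \<Rightarrow> ('e \<Rightarrow> 'v) \<Rightarrow> ('e \<Rightarrow> 'v) \<Rightarrow> 'v set \<Rightarrow> 'v set" where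
  "breaking V Ed s r G = {v \<in> V - G. infinite (src_inv Ed s v) \<and>
       {e \<in> src_inv Ed s v. r e \<in> V - G} \<noteq> {} \<and>
       finite {e \<in> src_inv Ed s v. r e \<in> V - G}}"

text \<open>The Leavitt path algebra relations for a family (P, S, Sst) of vertex, edge and
  ghost-edge elements in a ring A; the generators of L_K(E) form such a family.\<close>
definition leavitt_family ::
  "'v set \<Rightarrow> 'e set \<Rightarrow> ('e \<Rightarrow> 'v) \<Rightarrow> ('e \<Rightarrow> 'v) \<Rightarrow>
   ('v \<Rightarrow> 'a::ring_1) \<Rightarrow> ('e \<Rightarrow> 'a) \<Rightarrow> ('e \<Rightarrow> 'a) \<Rightarrow> bool" where
  "leavitt_family V Ed s r P S Sst \<longleftrightarrow>
     (\<forall>v\<in>V. \<forall>w\<in>V. P v * P w = (if v = w then P v else 0)) \<and>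
     (\<forall>e\<in>Ed. S e = P (s e) * S e \<and> S e = S e * P (r e)) \<and>
     (\<forall>e\<in>Ed. Sst e = P (r e) * Sst e \<and> Sst e = Sst e * P (s e)) \<and>
     (\<forall>e\<in>Ed. \<forall>f\<in>Ed. Sst e * S f = (if e = f then P (r e) else 0)) \<and>
     (\<forall>v\<in>V. regular Ed s v \<longrightarrow> P v = (\<Sum>e\<in>src_inv Ed s v. S e * Sst e))"

definition vG ::
  "'v set \<Rightarrow> 'e set \<Rightarrow> ('e \<Rightarrow> 'v) \<Rightarrow> ('e \<Rightarrow> 'v) \<Rightarrow>
   ('v \<Rightarrow> 'a::ring_1) \<Rightarrow> ('e \<Rightarrow> 'a) \<Rightarrow> ('e \<Rightarrow> 'a) \<Rightarrow> 'v set \<Rightarrow> 'v \<Rightarrow> 'a" where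
  "vG V Ed s r P S Sst G v =
     P v - (\<Sum>e\<in>{e \<in> src_inv Ed s v. r e \<in> V - G}. S e * Sst e)"

end

theory Submission
  imports Defs
begin

text \<open>Since \<open>R(H) \<subseteq> E\<^sup>0\<close>, the complement of \<open>H\<^sup>\<bottom>\<close> is exactly \<open>R(H)\<close>, so the first three
  claims just unfold \<open>v \<in> B\<^bsub>H\<^sup>\<bottom>\<^esub>\<close>. If \<open>v\<close> were in \<open>H\<close>, heredity would send all of its
  infinitely many edges into \<open>H \<subseteq> R(H)\<close>, contradicting finiteness of
  \<open>s\<^sup>-\<^sup>1(v) \<inter> r\<^sup>-\<^sup>1(R(H))\<close>.\<close>

lemma tree_R_subset: "tree_R V Ed s r W \<subseteq> V"
  unfolding tree_R_def by auto

lemma subset_tree_R: "W \<subseteq> V \<Longrightarrow> W \<subseteq> tree_R V Ed s r W"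
  unfolding tree_R_def geq_def by auto

lemma hereditary_range_src_inv:
  assumes "hereditary V Ed s r H" and "v \<in> H" and "e \<in> src_inv Ed s v"
  shows "r e \<in> H"
proof -
  have "is_path Ed s r [e]" and "s (hd [e]) \<in> H"
    using assms(2,3) unfolding src_inv_def by auto
  then show ?thesis
    using assms(1) unfolding hereditary_def by fastforce
qed

lemma breaking_diff:
  assumes "X \<subseteq> V"
  shows "breaking V Ed s r (V - X) = {v \<in> X. infinite (src_inv Ed s v) \<and>
       {e \<in> src_inv Ed s v. r e \<in> X} \<noteq> {} \<and> finite {e \<in> src_inv Ed s v. r e \<in> X}}"
proof -
  have "V - (V - X) = X" using assms by blast
  then show ?thesis unfolding breaking_def by simp
qed

lemma vG_diff:
  assumes "X \<subseteq> V"
  shows "vG V Ed s r P S Sst (V - X) v = P v - (\<Sum>e\<in>{e \<in> src_inv Ed s v. r e \<in> X}. S e * Sst e)"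
proof -
  have "V - (V - X) = X" using assms by blast
  then show ?thesis unfolding vG_def by simp
qed

lemma breaking_disjoint_hereditary:
  assumes "hereditary V Ed s r H" and "H \<inter> G = {}" and "v \<in> breaking V Ed s r G"
  shows "v \<notin> H"
proof
  assume "v \<in> H"
  have "H \<subseteq> V" using assms(1) unfolding hereditary_def by blast
  with \<open>v \<in> H\<close> assms(1,2) have "{e \<in> src_inv Ed s v. r e \<in> V - G} = src_inv Ed s v"
    by (auto dest: hereditary_range_src_inv)
  with assms(3) show False unfolding breaking_def by auto
qed

theorem lemma3p4:
  fixes V :: "'v set" and Ed :: "'e set" and s r :: "'e \<Rightarrow> 'v"
    and P :: "'v \<Rightarrow> 'a::ring_1" and S Sst :: "'e \<Rightarrow> 'a"
    and H :: "'v set" and v :: 'v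
  assumes "graph V Ed s r"
    and "leavitt_family V Ed s r P S Sst"
    and "hereditary V Ed s r H" and "saturated V Ed s r H"
    and "v \<in> breaking V Ed s r (V - tree_R V Ed s r H)"
  shows "{e \<in> src_inv Ed s v. r e \<in> tree_R V Ed s r H} \<noteq> {}
    \<and> finite {e \<in> src_inv Ed s v. r e \<in> tree_R V Ed s r H}
    \<and> vG V Ed s r P S Sst (V - tree_R V Ed s r H) v
        = P v - (\<Sum>e\<in>{e \<in> src_inv Ed s v. r e \<in> tree_R V Ed s r H}. S e * Sst e)
    \<and> v \<in> tree_R V Ed s r H - H"
proof -
  let ?R = "tree_R V Ed s r H"
  have breaking: "v \<in> ?R" "{e \<in> src_inv Ed s v. r e \<in> ?R} \<noteq> {}"
    "finite {e \<in> src_inv Ed s v. r e \<in> ?R}"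
    using assms(5) unfolding breaking_diff[OF tree_R_subset] by auto
  have "H \<subseteq> ?R"
    using assms(3) subset_tree_R unfolding hereditary_def by blast
  then have "v \<notin> H"
    using breaking_disjoint_hereditary[OF assms(3) _ assms(5)] by blast
  with breaking show ?thesis
    by (simp add: vG_diff[OF tree_R_subset])
qed

end
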